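(* Let $\mu>0$ be an integer, $\beta\ge 2$ an integer base, and $f:\{0,1,\dots,\mu\}^\omega\to\mathbb{R}$ an aggregate function. If $f$ is $\omega$-regular under base $\beta$, then for every relation $R\in\{\le,<,\ge,>,=,\neq\}$ there is a B\"uchi automaton over $\{0,\dots,\mu\}\times\{0,\dots,\mu\}$ accepting exactly the pairs $(A,B)$ of sequences in $\{0,\dots,\mu\}^\omega$ (read synchronously) with $f(A)\,R\,f(B)$; i.e., the comparator of $f$ for every relation $R$ is $\omega$-regular.
   Context: Representation of reals: for an integer $\beta\ge 2$ let $\mathrm{Digit}(\beta)=\{0,\dots,\beta-1\}$. For $x\in\mathbb{R}$ there are unique words $\mathrm{Int}(x,\beta)=z_0z_1\cdots\in\mathrm{Digit}(\beta)^*0^\omega$ and $\mathrm{Frac}(x,\beta)=f_1f_2\cdots\notin \mathrm{Digit}(\beta)^*(\beta-1)^\omega$ with $|x|=\sum_{i\ge0}z_i\beta^i+\sum_{i\ge1}f_i\beta^{-i}$. The representation $\mathrm{rep}(x,\beta)$ is the $\omega$-word consisting of a sign symbol ($+$ if $x\ge0$, $-$ if $x<0$) followed by the interleaving of $\mathrm{Int}(x,\beta)$ and $\mathrm{Frac}(x,\beta)$; its alphabet is $\mathrm{AlphaRep}(\beta)=\{+,-\}\cup\mathrm{Digit}(\beta)$. A function $f:\Sigma^\omega\to\mathbb{R}$ ($\Sigma$ finite) is $\omega$-regular under base $\beta$ if there is a B\"uchi automaton over $\Sigma\times\mathrm{AlphaRep}(\beta)$ that, reading pairs of $\omega$-words synchronously,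 accepts $(A,\mathrm{rep}(x,\beta))$ iff $f(A)=x$, for all $A\in\Sigma^\omega$, $x\in\mathbb{R}$. A comparator automaton for $f$ and relation $R$ is an automaton over $\Sigma\times\Sigma$ accepting $(A,B)$ iff $f(A)\,R\,f(B)$; it is $\omega$-regular if it is a finite-state B\"uchi automaton. *)

theory Defs
  imports Complex_Main
begin

record 'a buchi =
  states :: "nat set"
  initial :: "nat set"
  trans :: "(nat \<times> 'a \<times> nat) set"
  final :: "nat set"

definition buchi_over :: "'a set \<Rightarrow> 'a buchi \<Rightarrow> bool" where
  "buchi_over S M \<longleftrightarrow> finite (states M) \<and> initial M \<subseteq> states M \<and>
     final M \<subseteq> states M \<and>
     (\<forall>(p, a, q) \<in> trans M. p \<in> states M \<and> a \<in> S \<and> q \<in> states M)"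

definition buchi_accepts :: "'a buchi \<Rightarrow> (nat \<Rightarrow> 'a) \<Rightarrow> bool" where
  "buchi_accepts M w \<longleftrightarrow> (\<exists>r :: nat \<Rightarrow> nat. r 0 \<in> initial M \<and>
     (\<forall>i. (r i, w i, r (Suc i)) \<in> trans M) \<and>
     (\<exists>\<^sub>\<infinity>i. r i \<in> final M))"

datatype repsym = Plus | Minus | Dig nat

definition Digit :: "nat \<Rightarrow> nat set" where
  "Digit \<beta> = {0..<\<beta>}"

definition AlphaRep :: "nat \<Rightarrow> repsym set" where
  "AlphaRep \<beta> = {Plus, Minus} \<union> Dig ` Digit \<beta>"

definition int_digit :: "real \<Rightarrow> nat \<Rightarrow> nat \<Rightarrow> nat" where
  "int_digit x \<beta> i = nat (\<lfloor>\<bar>x\<bar> / real \<beta> ^ i\<rfloor> mod int \<beta>)"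

text \<open>Frac(x,beta) = f_1 f_2 ...: f_i (i \<ge> 1) is the i-th fractional digit of |x|,
  the expansion not ending in (beta-1)^omega.\<close>
definition frac_digit :: "real \<Rightarrow> nat \<Rightarrow> nat \<Rightarrow> nat" where
  "frac_digit x \<beta> i = nat (\<lfloor>\<bar>x\<bar> * real \<beta> ^ i\<rfloor> mod int \<beta>)"

text \<open>rep(x,beta) = sign, z_0, f_1, z_1, f_2, z_2, f_3, ...\<close>
definition rep :: "real \<Rightarrow> nat \<Rightarrow> nat \<Rightarrow> repsym" where
  "rep x \<beta> n = (if n = 0 then (if x \<ge> 0 then Plus else Minus)
     else if odd n then Dig (int_digit x \<beta> ((n - 1) div 2))
     else Dig (frac_digit x \<beta> (n div 2)))"

definition omega_words :: "'a set \<Rightarrow> (nat \<Rightarrow> 'a) set" where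
  "omega_words S = {w. \<forall>i. w i \<in> S}"

definition omega_regular_function ::
  "'a set \<Rightarrow> ((nat \<Rightarrow> 'a) \<Rightarrow> real) \<Rightarrow> nat \<Rightarrow> bool" where
  "omega_regular_function S f \<beta> \<longleftrightarrow>
     (\<exists>M :: ('a \<times> repsym) buchi. buchi_over (S \<times> AlphaRep \<beta>) M \<and>
        (\<forall>A \<in> omega_words S. \<forall>x :: real.
           buchi_accepts M (\<lambda>i. (A i, rep x \<beta> i)) \<longleftrightarrow> f A = x))"

definition omega_regular_comparator ::
  "'a set \<Rightarrow> ((nat \<Rightarrow> 'a) \<Rightarrow> real) \<Rightarrow> (real \<Rightarrow> real \<Rightarrow> bool) \<Rightarrow> bool" where
  "omega_regular_comparator S f R \<longleftrightarrow>
     (\<exists>M :: ('a \<times> 'a) buchi. buchi_over (S \<times> S) M \<and>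
        (\<forall>A \<in> omega_words S. \<forall>B \<in> omega_words S.
           buchi_accepts M (\<lambda>i. (A i, B i)) \<longleftrightarrow> R (f A) (f B)))"

end

theory Submission
  imports Defs "HOL-Library.Infinite_Set" "HOL-Library.Countable"
begin

text \<open>A pair \<open>(A, B)\<close> satisfies \<open>f A R f B\<close> iff there are words \<open>u, v\<close> such that the automaton
  for \<open>f\<close> accepts \<open>(A, u)\<close> and \<open>(B, v)\<close>, both \<open>u\<close> and \<open>v\<close> represent reals, and these reals
  are related by \<open>R\<close>: the automaton for \<open>f\<close> then forces \<open>u = rep (f A)\<close> and \<open>v = rep (f B)\<close>.
  Since \<omega>-regular languages are closed under intersection, inverse and direct letter-to-letter
  images, it suffices that the set of representations and the comparison of two
  representations are \<omega>-regular. Representations are characterised by local conditions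
  together with: finitely many nonzero integer digits, infinitely many non-maximal fractional
  digits, and no negative zero. Two representations are compared with finite memory: integer
  digits arrive least significant first and fractional digits most significant first, so it
  suffices to remember the signs and the decisive difference in each part, and from some
  position on this state determines the comparison of the two reals.\<close>

record ('q, 'a) nba =
  nba_states :: "'q set"
  nba_init :: "'q set"
  nba_trans :: "('q \<times> 'a \<times> 'q) set"
  nba_final :: "'q set"

definition nba_run :: "('q, 'a) nba \<Rightarrow> (nat \<Rightarrow> 'a) \<Rightarrow> (nat \<Rightarrow> 'q) \<Rightarrow> bool" where
  "nba_run M w r \<longleftrightarrow> r 0 \<in> nba_init M \<and> (\<forall>i. (r i, w i, r (Suc i)) \<in> nba_trans M)"

definition nba_accepts :: "('q, 'a) nba \<Rightarrow> (nat \<Rightarrow> 'a) \<Rightarrow> bool" where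
  "nba_accepts M w \<longleftrightarrow> (\<exists>r. nba_run M w r \<and> (\<exists>\<^sub>\<infinity>i. r i \<in> nba_final M))"

definition nba_wf :: "('q, 'a) nba \<Rightarrow> bool" where
  "nba_wf M \<longleftrightarrow> finite (nba_states M) \<and> nba_init M \<subseteq> nba_states M \<and> nba_final M \<subseteq> nba_states M \<and>
     (\<forall>(p, a, q) \<in> nba_trans M. p \<in> nba_states M \<and> q \<in> nba_states M)"

definition omega_regular :: "(nat \<Rightarrow> 'a) set \<Rightarrow> bool" where
  "omega_regular L \<longleftrightarrow> (\<exists>M :: 'a buchi. buchi_over UNIV M \<and> L = {w. buchi_accepts M w})"

lemma omega_regularE:
  assumes "omega_regular L"
  obtains M :: "'a buchi" where "buchi_over UNIV M" "L = {w. buchi_accepts M w}"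
  using assms unfolding omega_regular_def by blast

lemma omega_regular_nba:
  fixes M :: "('q::countable, 'a) nba"
  assumes "nba_wf M"
  shows "omega_regular {w. nba_accepts M w}"
proof -
  let ?e = "to_nat :: 'q \<Rightarrow> nat" and ?d = "from_nat :: nat \<Rightarrow> 'q"
  define B :: "'a buchi" where "B = \<lparr>states = ?e ` nba_states M, initial = ?e ` nba_init M,
     trans = (\<lambda>(p, a, q). (?e p, a, ?e q)) ` nba_trans M, final = ?e ` nba_final M\<rparr>"
  have "buchi_over UNIV B" using assms unfolding buchi_over_def nba_wf_def B_def by auto
  moreover have "buchi_accepts B w \<longleftrightarrow> nba_accepts M w" for w
  proof
    assume "buchi_accepts B w"
    then obtain r where r: "r 0 \<in> initial B" "\<forall>i. (r i, w i, r (Suc i)) \<in> trans B"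
      "\<exists>\<^sub>\<infinity>i. r i \<in> final B" unfolding buchi_accepts_def by blast
    have "(?d (r i), w i, ?d (r (Suc i))) \<in> nba_trans M" for i
      using r(2)[rule_format, of i] unfolding B_def by auto
    then have "nba_run M w (?d \<circ> r)"
      using r(1) unfolding nba_run_def B_def by auto
    moreover have "\<exists>\<^sub>\<infinity>i. (?d \<circ> r) i \<in> nba_final M"
      using r(3) by (rule INFM_mono) (auto simp: B_def)
    ultimately show "nba_accepts M w" unfolding nba_accepts_def by blast
  next
    assume "nba_accepts M w"
    then obtain r where "nba_run M w r" "\<exists>\<^sub>\<infinity>i. r i \<in> nba_final M" unfolding nba_accepts_def by blast
    then show "buchi_accepts B w" unfolding buchi_accepts_def nba_run_def B_def
      by (intro exI[of _ "?e \<circ> r"]) (auto elim!: INFM_mono intro: rev_image_eqI)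
  qed
  ultimately show ?thesis unfolding omega_regular_def by blast
qed

lemma omega_regular_vimage:
  fixes h :: "'a \<Rightarrow> 'b"
  assumes "omega_regular L"
  shows "omega_regular {w. h \<circ> w \<in> L}"
proof -
  obtain M :: "'b buchi" where M: "buchi_over UNIV M" "L = {w. buchi_accepts M w}"
    using assms by (rule omega_regularE)
  define N :: "(nat, 'a) nba" where "N = \<lparr>nba_states = states M, nba_init = initial M,
     nba_trans = {(p, a, q). (p, h a, q) \<in> trans M}, nba_final = final M\<rparr>"
  have "nba_wf N" using M(1) unfolding buchi_over_def nba_wf_def N_def by auto
  moreover have "nba_accepts N w \<longleftrightarrow> h \<circ> w \<in> L" for w
    unfolding M(2) nba_accepts_def nba_run_def buchi_accepts_def N_def by simp
  ultimately show ?thesis using omega_regular_nba[of N] by simp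
qed

lemma omega_regular_image:
  fixes h :: "'a \<Rightarrow> 'b"
  assumes "omega_regular L"
  shows "omega_regular ((\<lambda>w. h \<circ> w) ` L)"
proof -
  obtain M :: "'a buchi" where M: "buchi_over UNIV M" "L = {w. buchi_accepts M w}"
    using assms by (rule omega_regularE)
  define N :: "(nat, 'b) nba" where "N = \<lparr>nba_states = states M, nba_init = initial M,
     nba_trans = (\<lambda>(p, a, q). (p, h a, q)) ` trans M, nba_final = final M\<rparr>"
  have "nba_wf N" using M(1) unfolding buchi_over_def nba_wf_def N_def by auto
  moreover have "nba_accepts N w \<longleftrightarrow> w \<in> (\<lambda>w. h \<circ> w) ` L" for w
  proof
    assume "nba_accepts N w"
    then obtain r where r: "r 0 \<in> initial M" "\<forall>i. (r i, w i, r (Suc i)) \<in> nba_trans N"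
      "\<exists>\<^sub>\<infinity>i. r i \<in> final M" unfolding nba_accepts_def nba_run_def N_def by auto
    have "\<forall>i. \<exists>a. (r i, a, r (Suc i)) \<in> trans M \<and> w i = h a"
      using r(2) unfolding N_def by force
    then obtain v where v: "\<forall>i. (r i, v i, r (Suc i)) \<in> trans M \<and> w i = h (v i)" by metis
    then have "buchi_accepts M v" unfolding buchi_accepts_def using r(1,3) by blast
    moreover have "w = h \<circ> v" using v by auto
    ultimately show "w \<in> (\<lambda>w. h \<circ> w) ` L" unfolding M(2) by blast
  next
    assume "w \<in> (\<lambda>w. h \<circ> w) ` L"
    then obtain v r where "r 0 \<in> initial M" "\<forall>i. (r i, v i, r (Suc i)) \<in> trans M"
      "\<exists>\<^sub>\<infinity>i. r i \<in> final M" and "w = h \<circ> v"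
      unfolding M(2) buchi_accepts_def by blast
    then show "nba_accepts N w" unfolding nba_accepts_def nba_run_def N_def
      by (auto intro!: exI[of _ r] rev_image_eqI)
  qed
  ultimately show ?thesis using omega_regular_nba[of N] by simp
qed

lemma buchi_over_imp_omega_regular:
  assumes "buchi_over S M"
  shows "omega_regular {w. buchi_accepts M w}"
  using assms unfolding omega_regular_def buchi_over_def by blast

lemma omega_regular_imp_buchi_over:
  assumes "omega_regular L"
  obtains M where "buchi_over S M" "\<And>w. w \<in> omega_words S \<Longrightarrow> buchi_accepts M w \<longleftrightarrow> w \<in> L"
proof -
  obtain N :: "'a buchi" where N: "buchi_over UNIV N" "L = {w. buchi_accepts N w}"
    using assms by (rule omega_regularE)
  define M where "M = N\<lparr>trans := {(p, a, q) \<in> trans N. a \<in> S}\<rparr>"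
  have "buchi_over S M" using N(1) unfolding buchi_over_def M_def by auto
  moreover have "buchi_accepts M w \<longleftrightarrow> w \<in> L" if "w \<in> omega_words S" for w
    using that unfolding N(2) buchi_accepts_def omega_words_def M_def by auto
  ultimately show ?thesis using that by blast
qed

lemma INFM_alternating_flag:
  fixes P Q :: "nat \<Rightarrow> bool"
  assumes b: "\<And>i. b (Suc i) = (if b i then \<not> Q i else P i)"
  shows "(\<exists>\<^sub>\<infinity>i. b i \<and> Q i) \<longleftrightarrow> (\<exists>\<^sub>\<infinity>i. P i) \<and> (\<exists>\<^sub>\<infinity>i. Q i)"
proof (intro iffI conjI)
  assume bQ: "\<exists>\<^sub>\<infinity>i. b i \<and> Q i"
  then show "\<exists>\<^sub>\<infinity>i. Q i" by (rule INFM_mono) simp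
  show "\<exists>\<^sub>\<infinity>i. P i" unfolding INFM_nat
  proof
    fix m
    obtain i where i: "i > m" "b i" "Q i" using bQ unfolding INFM_nat by blast
    obtain j where j: "j > Suc i" "b j" using bQ unfolding INFM_nat by blast
    have "\<exists>k\<ge>Suc i. k < j \<and> P k"
    proof (rule ccontr)
      assume "\<not> ?thesis"
      then have noP: "\<not> P n" if "Suc i \<le> n" "n < j" for n
        using that by blast
      have "\<not> b j" using less_imp_le[OF j(1)]
      proof (induction rule: dec_induct)
        case (step n) then show ?case using b[of n] noP[of n] by auto
      qed (use b[of i] i in simp)
      then show False using j(2) by simp
    qed
    then show "\<exists>k>m. P k" using i(1) by (meson Suc_le_lessD less_trans)
  qed
next
  assume PQ: "(\<exists>\<^sub>\<infinity>i. P i) \<and> (\<exists>\<^sub>\<infinity>i. Q i)"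
  show "\<exists>\<^sub>\<infinity>i. b i \<and> Q i" unfolding INFM_nat
  proof
    fix m
    obtain i where i: "i > m" "P i" using PQ unfolding INFM_nat by blast
    obtain j where j: "j > m" "b j"
      using i b[of i] by (cases "b i") (auto intro: less_SucI)
    have ex: "\<exists>k\<ge>j. Q k" using PQ unfolding INFM_nat_le by blast
    define k where "k = (LEAST k. j \<le> k \<and> Q k)"
    have k: "j \<le> k" "Q k" using LeastI_ex[OF ex] unfolding k_def by auto
    have k_least: "\<not> Q n" if "j \<le> n" "n < k" for n
      using that not_less_Least unfolding k_def by blast
    have "b k" using k(1)
    proof (induction rule: dec_induct)
      case (step n) then show ?case using b[of n] k_least[of n] by simp
    qed (rule j(2))
    then show "\<exists>k>m. b k \<and> Q k" using j(1) k(1,2) by (meson less_le_trans)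
  qed
qed

lemma buchi_run_in_states:
  assumes "buchi_over S M" "r 0 \<in> initial M" "\<forall>i. (r i, w i, r (Suc i)) \<in> trans M"
  shows "r i \<in> states M"
proof (cases i)
  case 0 then show ?thesis using assms(1,2) unfolding buchi_over_def by auto
next
  case (Suc j) then show ?thesis using assms(1) assms(3)[rule_format, of j] unfolding buchi_over_def by auto
qed

lemma omega_regular_Int:
  assumes "omega_regular L1" "omega_regular L2"
  shows "omega_regular (L1 \<inter> L2)"
proof -
  obtain M1 :: "'a buchi" where M1: "buchi_over UNIV M1" "L1 = {w. buchi_accepts M1 w}"
    using assms(1) by (rule omega_regularE)
  obtain M2 :: "'a buchi" where M2: "buchi_over UNIV M2" "L2 = {w. buchi_accepts M2 w}"
    using assms(2) by (rule omega_regularE)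
  \<comment> \<open>the flag waits for an accepting state of \<open>M1\<close> and then for one of \<open>M2\<close>\<close>
  define N :: "(nat \<times> nat \<times> bool, 'a) nba" where "N = \<lparr>
     nba_states = states M1 \<times> states M2 \<times> UNIV,
     nba_init = initial M1 \<times> initial M2 \<times> UNIV,
     nba_trans = {((p1, p2, b), a, (q1, q2, b')). (p1, a, q1) \<in> trans M1 \<and> (p2, a, q2) \<in> trans M2 \<and>
                    b' = (if b then p2 \<notin> final M2 else p1 \<in> final M1)},
     nba_final = states M1 \<times> final M2 \<times> {True}\<rparr>"
  have "nba_wf N" using M1(1) M2(1) unfolding nba_wf_def buchi_over_def N_def by auto
  moreover have "nba_accepts N w \<longleftrightarrow> w \<in> L1 \<inter> L2" for w
  proof
    assume "nba_accepts N w"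
    then obtain r where r: "nba_run N w r" "\<exists>\<^sub>\<infinity>i. r i \<in> nba_final N"
      unfolding nba_accepts_def by blast
    define r1 r2 b where "r1 = fst \<circ> r" and "r2 = fst \<circ> snd \<circ> r" and "b = snd \<circ> snd \<circ> r"
    have run: "r1 0 \<in> initial M1" "r2 0 \<in> initial M2"
      "(r1 i, w i, r1 (Suc i)) \<in> trans M1" "(r2 i, w i, r2 (Suc i)) \<in> trans M2"
      and flag: "b (Suc i) = (if b i then r2 i \<notin> final M2 else r1 i \<in> final M1)" for i
      using r(1) unfolding nba_run_def N_def r1_def r2_def b_def
      by (auto simp: mem_Times_iff case_prod_beta)
    have "\<exists>\<^sub>\<infinity>i. b i \<and> r2 i \<in> final M2"
      using r(2) by (rule INFM_mono) (auto simp: N_def r2_def b_def)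
    then have "(\<exists>\<^sub>\<infinity>i. r1 i \<in> final M1) \<and> (\<exists>\<^sub>\<infinity>i. r2 i \<in> final M2)"
      using INFM_alternating_flag[where P="\<lambda>i. r1 i \<in> final M1" and Q="\<lambda>i. r2 i \<in> final M2", OF flag] by blast
    then show "w \<in> L1 \<inter> L2" unfolding M1(2) M2(2) buchi_accepts_def using run by blast
  next
    assume "w \<in> L1 \<inter> L2"
    then obtain r1 r2 where r1: "r1 0 \<in> initial M1" "\<forall>i. (r1 i, w i, r1 (Suc i)) \<in> trans M1"
        "\<exists>\<^sub>\<infinity>i. r1 i \<in> final M1"
      and r2: "r2 0 \<in> initial M2" "\<forall>i. (r2 i, w i, r2 (Suc i)) \<in> trans M2"
        "\<exists>\<^sub>\<infinity>i. r2 i \<in> final M2"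
      unfolding M1(2) M2(2) buchi_accepts_def by blast
    define b where "b = rec_nat False (\<lambda>i b. if b then r2 i \<notin> final M2 else r1 i \<in> final M1)"
    have flag: "b (Suc i) = (if b i then r2 i \<notin> final M2 else r1 i \<in> final M1)" for i
      unfolding b_def by simp
    have "\<exists>\<^sub>\<infinity>i. b i \<and> r2 i \<in> final M2"
      using INFM_alternating_flag[where P="\<lambda>i. r1 i \<in> final M1" and Q="\<lambda>i. r2 i \<in> final M2", OF flag] r1(3) r2(3) by blast
    then have "\<exists>\<^sub>\<infinity>i. (r1 i, r2 i, b i) \<in> nba_final N"
      by (rule INFM_mono) (simp add: N_def buchi_run_in_states[OF M1(1) r1(1,2)])
    moreover have "nba_run N w (\<lambda>i. (r1 i, r2 i, b i))"
      using r1(1,2) r2(1,2) flag unfolding nba_run_def N_def by simp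
    ultimately show "nba_accepts N w" unfolding nba_accepts_def by blast
  qed
  ultimately show ?thesis using omega_regular_nba[of N] by (simp add: Int_def)
qed

fun drun :: "'q \<Rightarrow> ('q \<Rightarrow> 'a \<Rightarrow> 'q) \<Rightarrow> (nat \<Rightarrow> 'a) \<Rightarrow> nat \<Rightarrow> 'q" where
  "drun q0 \<delta> w 0 = q0"
| "drun q0 \<delta> w (Suc i) = \<delta> (drun q0 \<delta> w i) (w i)"

lemma omega_regular_det:
  fixes q0 :: "'q::finite"
  shows "omega_regular {w. \<exists>\<^sub>\<infinity>i. drun q0 \<delta> w i \<in> F}"
proof -
  define N :: "('q, 'a) nba" where
    "N = \<lparr>nba_states = UNIV, nba_init = {q0}, nba_trans = {(p, a, q). q = \<delta> p a}, nba_final = F\<rparr>"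
  have "nba_wf N" unfolding nba_wf_def N_def by auto
  moreover have "nba_run N w r \<longleftrightarrow> r = drun q0 \<delta> w" for w r
  proof
    assume "nba_run N w r"
    then have "r i = drun q0 \<delta> w i" for i
      unfolding nba_run_def N_def by (induction i) auto
    then show "r = drun q0 \<delta> w" ..
  qed (simp add: nba_run_def N_def)
  ultimately show ?thesis using omega_regular_nba[of N] unfolding nba_accepts_def by (simp add: N_def)
qed

lemma omega_regular_always: "omega_regular {w. \<forall>i. P (w i)}"
proof -
  have run: "drun True (\<lambda>q a. q \<and> P a) w i \<longleftrightarrow> (\<forall>j<i. P (w j))" for w i
    by (induction i) (auto simp: less_Suc_eq)
  have "(\<exists>\<^sub>\<infinity>i. \<forall>j<i. P (w j)) \<longleftrightarrow> (\<forall>i. P (w i))" for w :: "nat \<Rightarrow> 'a"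
  proof (intro iffI allI)
    show "P (w i)" if "\<exists>\<^sub>\<infinity>i. \<forall>j<i. P (w j)" for i
      using that unfolding INFM_nat by blast
  qed simp
  then show ?thesis using omega_regular_det[of True "\<lambda>q a. q \<and> P a" "{True}"] by (simp add: run)
qed

lemma omega_regular_eventually: "omega_regular {w. \<exists>i. P (w i)}"
proof -
  have run: "drun False (\<lambda>q a. q \<or> P a) w i \<longleftrightarrow> (\<exists>j<i. P (w j))" for w i
    by (induction i) (auto simp: less_Suc_eq)
  have "(\<exists>\<^sub>\<infinity>i. \<exists>j<i. P (w j)) \<longleftrightarrow> (\<exists>i. P (w i))" for w :: "nat \<Rightarrow> 'a"
  proof
    show "\<exists>\<^sub>\<infinity>i. \<exists>j<i. P (w j)" if "\<exists>i. P (w i)"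
      using that by (intro MOST_INFM) (auto simp: MOST_nat)
  qed (auto simp: INFM_nat)
  then show ?thesis using omega_regular_det[of False "\<lambda>q a. q \<or> P a" "{True}"] by (simp add: run)
qed

lemma INFM_Suc_iff: "(\<exists>\<^sub>\<infinity>n. P (Suc n)) \<longleftrightarrow> (\<exists>\<^sub>\<infinity>n. P n)"
  using MOST_Suc_iff[of "\<lambda>n. \<not> P n"] unfolding not_INFM[symmetric] by blast

lemma omega_regular_INFM: "omega_regular {w. \<exists>\<^sub>\<infinity>i. P (w i)}"
proof -
  have "(\<exists>\<^sub>\<infinity>i. drun False (\<lambda>_ a. P a) w i) \<longleftrightarrow> (\<exists>\<^sub>\<infinity>i. P (w i))" for w :: "nat \<Rightarrow> 'a"
    using INFM_Suc_iff[of "drun False (\<lambda>_ a. P a) w"] by simp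
  then show ?thesis using omega_regular_det[of False "\<lambda>_ a. P a" "{True}"] by simp
qed

lemma omega_regular_MOST: "omega_regular {w. \<forall>\<^sub>\<infinity>i. P (w i)}"
proof -
  \<comment> \<open>the automaton guesses the point from which \<open>P\<close> holds forever\<close>
  define N :: "(bool, 'a) nba" where "N = \<lparr>nba_states = UNIV, nba_init = {False},
     nba_trans = {(p, a, q). (p \<longrightarrow> q) \<and> (q \<longrightarrow> P a)}, nba_final = {True}\<rparr>"
  have "nba_wf N" unfolding nba_wf_def N_def by auto
  moreover have "nba_accepts N w \<longleftrightarrow> (\<forall>\<^sub>\<infinity>i. P (w i))" for w
  proof
    assume "nba_accepts N w"
    then obtain r where r: "\<forall>i. (r i \<longrightarrow> r (Suc i)) \<and> (r (Suc i) \<longrightarrow> P (w i))" "\<exists>\<^sub>\<infinity>i. r i"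
      unfolding nba_accepts_def nba_run_def N_def by auto
    obtain n where n: "r n" using r(2) by (auto simp: INFM_nat)
    have "r i" if "n \<le> i" for i
      using that by (induction i rule: dec_induct) (use n r(1) in auto)
    then show "\<forall>\<^sub>\<infinity>i. P (w i)" unfolding MOST_nat_le using r(1) by blast
  next
    assume "\<forall>\<^sub>\<infinity>i. P (w i)"
    then obtain n where "\<forall>i\<ge>n. P (w i)" unfolding MOST_nat_le by blast
    then have "nba_run N w (\<lambda>i. n < i)" unfolding nba_run_def N_def by auto
    moreover have "\<exists>\<^sub>\<infinity>i. n < i" by (rule MOST_INFM) (auto simp: MOST_nat)
    ultimately show "nba_accepts N w" unfolding nba_accepts_def N_def by auto
  qed
  ultimately show ?thesis using omega_regular_nba[of N] by simp
qed

lemma omega_regular_annotate: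
  fixes step :: "'c::finite \<Rightarrow> 'c"
  assumes "omega_regular L"
  shows "omega_regular {w. (\<lambda>i. (w i, (step ^^ i) c0)) \<in> L}"
proof -
  let ?c = "\<lambda>i. (step ^^ i) c0"
  have run: "drun (c0, True) (\<lambda>(c, ok) (x :: 'a \<times> 'c). (step c, ok \<and> snd x = c)) v i =
      (?c i, \<forall>j<i. snd (v j) = ?c j)" for v :: "nat \<Rightarrow> 'a \<times> 'c" and i
    by (induction i) (auto simp: less_Suc_eq)
  have "(\<exists>\<^sub>\<infinity>i. \<forall>j<i. snd (v j) = ?c j) \<longleftrightarrow> (\<forall>i. snd (v i) = ?c i)" for v :: "nat \<Rightarrow> 'a \<times> 'c"
  proof (intro iffI allI)
    show "snd (v i) = ?c i" if "\<exists>\<^sub>\<infinity>i. \<forall>j<i. snd (v j) = ?c j" for i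
      using that unfolding INFM_nat by blast
  qed simp
  then have "{v. \<exists>\<^sub>\<infinity>i. drun (c0, True) (\<lambda>(c, ok) (x :: 'a \<times> 'c). (step c, ok \<and> snd x = c)) v i \<in> UNIV \<times> {True}}
      = {v :: nat \<Rightarrow> 'a \<times> 'c. \<forall>i. snd (v i) = ?c i}"
    unfolding run by simp
  then have "omega_regular {v :: nat \<Rightarrow> 'a \<times> 'c. \<forall>i. snd (v i) = ?c i}"
    using omega_regular_det[of "(c0, True)" "\<lambda>(c, ok) (x :: 'a \<times> 'c). (step c, ok \<and> snd x = c)" "UNIV \<times> {True}"]
    by simp
  then have "omega_regular ((\<lambda>v. fst \<circ> v) ` (L \<inter> {v. \<forall>i. snd (v i) = ?c i}))"
    by (intro omega_regular_image omega_regular_Int assms)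
  moreover have "(\<lambda>v. fst \<circ> v) ` (L \<inter> {v. \<forall>i. snd (v i) = ?c i}) = {w. (\<lambda>i. (w i, ?c i)) \<in> L}"
  proof (intro set_eqI iffI)
    fix w assume "w \<in> (\<lambda>v. fst \<circ> v) ` (L \<inter> {v. \<forall>i. snd (v i) = ?c i})"
    then obtain v where v: "v \<in> L" "\<forall>i. snd (v i) = ?c i" and w: "w = fst \<circ> v" by blast
    have "v = (\<lambda>i. (w i, ?c i))"
    proof
      fix i show "v i = (w i, ?c i)" using v(2) unfolding w by (simp add: prod_eq_iff)
    qed
    then show "w \<in> {w. (\<lambda>i. (w i, ?c i)) \<in> L}" using v(1) by simp
  next
    fix w assume "w \<in> {w. (\<lambda>i. (w i, ?c i)) \<in> L}"
    then show "w \<in> (\<lambda>v. fst \<circ> v) ` (L \<inter> {v. \<forall>i. snd (v i) = ?c i})"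
      by (intro rev_image_eqI[of "\<lambda>i. (w i, ?c i)"]) (auto simp: o_def)
  qed
  ultimately show ?thesis by simp
qed

lemma omega_regular_compose:
  assumes "omega_regular L1" "omega_regular L2" "omega_regular C"
  shows "omega_regular {w. \<exists>u v. (\<lambda>i. (fst (w i), u i)) \<in> L1 \<and> (\<lambda>i. (snd (w i), v i)) \<in> L2 \<and>
    (\<lambda>i. (u i, v i)) \<in> C}"
proof -
  define P where "P = {x. (\<lambda>(a, b, u, v). (a, u)) \<circ> x \<in> L1} \<inter> {x. (\<lambda>(a, b, u, v). (b, v)) \<circ> x \<in> L2}
    \<inter> {x. (\<lambda>(a, b, u, v). (u, v)) \<circ> x \<in> C}"
  have "omega_regular ((\<lambda>x. (\<lambda>(a, b, u, v). (a, b)) \<circ> x) ` P)"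
    unfolding P_def by (intro omega_regular_image omega_regular_Int omega_regular_vimage assms)
  moreover have "(\<lambda>x. (\<lambda>(a, b, u, v). (a, b)) \<circ> x) ` P = {w. \<exists>u v. (\<lambda>i. (fst (w i), u i)) \<in> L1 \<and>
      (\<lambda>i. (snd (w i), v i)) \<in> L2 \<and> (\<lambda>i. (u i, v i)) \<in> C}"
  proof (intro set_eqI iffI)
    fix w assume "w \<in> (\<lambda>x. (\<lambda>(a, b, u, v). (a, b)) \<circ> x) ` P"
    then obtain x where x: "x \<in> P" and w: "w = (\<lambda>(a, b, u, v). (a, b)) \<circ> x" by blast
    define u v where "u i = fst (snd (snd (x i)))" and "v i = snd (snd (snd (x i)))" for i
    have "(\<lambda>(a, b, u, v). (a, u)) \<circ> x = (\<lambda>i. (fst (w i), u i))"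
      "(\<lambda>(a, b, u, v). (b, v)) \<circ> x = (\<lambda>i. (snd (w i), v i))"
      "(\<lambda>(a, b, u, v). (u, v)) \<circ> x = (\<lambda>i. (u i, v i))"
      unfolding w u_def v_def by (simp_all add: fun_eq_iff case_prod_beta)
    then show "w \<in> {w. \<exists>u v. (\<lambda>i. (fst (w i), u i)) \<in> L1 \<and>
      (\<lambda>i. (snd (w i), v i)) \<in> L2 \<and> (\<lambda>i. (u i, v i)) \<in> C}"
      using x unfolding P_def by auto
  next
    fix w assume "w \<in> {w. \<exists>u v. (\<lambda>i. (fst (w i), u i)) \<in> L1 \<and>
      (\<lambda>i. (snd (w i), v i)) \<in> L2 \<and> (\<lambda>i. (u i, v i)) \<in> C}"
    then obtain u v where "(\<lambda>i. (fst (w i), u i)) \<in> L1" "(\<lambda>i. (snd (w i), v i)) \<in> L2"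
      "(\<lambda>i. (u i, v i)) \<in> C" by blast
    then show "w \<in> (\<lambda>x. (\<lambda>(a, b, u, v). (a, b)) \<circ> x) ` P"
      unfolding P_def by (intro rev_image_eqI[of "\<lambda>i. (fst (w i), snd (w i), u i, v i)"]) (auto simp: o_def)
  qed
  ultimately show ?thesis by simp
qed

definition scaled_floor :: "nat \<Rightarrow> real \<Rightarrow> nat \<Rightarrow> nat" where
  "scaled_floor \<beta> x k = nat \<lfloor>\<bar>x\<bar> * real \<beta> ^ k\<rfloor>"

lemma scaled_floor_le: "real (scaled_floor \<beta> x k) \<le> \<bar>x\<bar> * real \<beta> ^ k"
  unfolding scaled_floor_def by simp

lemma scaled_floor_gt: "\<bar>x\<bar> * real \<beta> ^ k < real (scaled_floor \<beta> x k) + 1"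
  unfolding scaled_floor_def by linarith

lemma scaled_floor_0: "scaled_floor \<beta> x 0 = nat \<lfloor>\<bar>x\<bar>\<rfloor>"
  unfolding scaled_floor_def by simp

lemma nat_floor_div: "0 \<le> t \<Longrightarrow> nat \<lfloor>t\<rfloor> div n = nat \<lfloor>t / real n\<rfloor>"
  using floor_divide_real_eq_div[of "int n" t] by (simp add: nat_div_distrib)

lemma int_digit_eq: "int_digit x \<beta> i = nat \<lfloor>\<bar>x\<bar>\<rfloor> div \<beta> ^ i mod \<beta>"
  unfolding int_digit_def nat_floor_div[OF abs_ge_zero] by (simp add: nat_mod_distrib)

lemma frac_digit_eq: "frac_digit x \<beta> k = scaled_floor \<beta> x k mod \<beta>"
  unfolding frac_digit_def scaled_floor_def by (simp add: nat_mod_distrib)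

lemma scaled_floor_div_power:
  assumes "\<beta> > 0"
  shows "scaled_floor \<beta> x (m + k) div \<beta> ^ k = scaled_floor \<beta> x m"
proof -
  have "\<bar>x\<bar> * real \<beta> ^ (m + k) / real (\<beta> ^ k) = \<bar>x\<bar> * real \<beta> ^ m"
    using assms by (simp add: power_add)
  then show ?thesis unfolding scaled_floor_def by (simp add: nat_floor_div)
qed

lemma scaled_floor_Suc:
  assumes "\<beta> > 0"
  shows "scaled_floor \<beta> x (Suc k) = \<beta> * scaled_floor \<beta> x k + frac_digit x \<beta> (Suc k)"
  using scaled_floor_div_power[OF assms, of x k 1]
  by (metis Suc_eq_plus1 div_mult_mod_eq frac_digit_eq mult.commute power_one_right)

lemma scaled_floor_eq_int_part:
  assumes "\<beta> > 0"
  shows "scaled_floor \<beta> x k = \<beta> ^ k * nat \<lfloor>\<bar>x\<bar>\<rfloor> + scaled_floor \<beta> x k mod \<beta> ^ k"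
  using scaled_floor_div_power[OF assms, of x 0 k]
  by (metis add_0 div_mult_mod_eq mult.commute scaled_floor_0)

lemma scaled_floor_mod_Suc:
  assumes "\<beta> > 0"
  shows "scaled_floor \<beta> x (Suc k) mod \<beta> ^ Suc k = \<beta> * (scaled_floor \<beta> x k mod \<beta> ^ k) + frac_digit x \<beta> (Suc k)"
  using mod_mult2_eq[of "scaled_floor \<beta> x (Suc k)" \<beta> "\<beta> ^ k"] scaled_floor_div_power[OF assms, of x k 1]
  by (simp add: frac_digit_eq mult.commute)

lemma less_power_base: "\<beta> \<ge> 2 \<Longrightarrow> n < \<beta> ^ n"
  using less_exp[of n] power_mono[of 2 \<beta> n] by linarith

lemma int_digit_eq_0:
  assumes "\<beta> \<ge> 2" "nat \<lfloor>\<bar>x\<bar>\<rfloor> \<le> i"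
  shows "int_digit x \<beta> i = 0"
  using less_power_base[OF assms(1), of i] assms(2) by (simp add: int_digit_eq)

lemma nat_eq_0_if_digits_0:
  fixes n :: nat
  assumes "\<beta> \<ge> 2" "\<forall>i. n div \<beta> ^ i mod \<beta> = 0"
  shows "n = 0"
proof -
  have "n mod \<beta> ^ i = 0" for i
  proof (induction i)
    case (Suc i) then show ?case
      using assms(2) mod_mult2_eq[of n "\<beta> ^ i" \<beta>] by (simp add: mult.commute)
  qed simp
  then show ?thesis using less_power_base[OF assms(1), of n] by (metis mod_less)
qed

lemma frac_digit_INFM_not_max:
  assumes "\<beta> \<ge> 2"
  shows "\<exists>\<^sub>\<infinity>k. frac_digit x \<beta> k \<noteq> \<beta> - 1"
proof (rule ccontr)
  assume "\<not> ?thesis"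
  then obtain N where max: "\<And>k. k > N \<Longrightarrow> frac_digit x \<beta> k = \<beta> - 1"
    unfolding not_INFM MOST_nat by blast
  \<comment> \<open>a tail of maximal digits makes the truncations approach their upper bound\<close>
  have tower: "scaled_floor \<beta> x (N + j) + 1 = \<beta> ^ j * (scaled_floor \<beta> x N + 1)" for j
  proof (induction j)
    case (Suc j)
    have "scaled_floor \<beta> x (N + Suc j) + 1 = \<beta> * (scaled_floor \<beta> x (N + j) + 1)"
      using scaled_floor_Suc[of \<beta> x "N + j"] max[of "N + Suc j"] assms by simp
    also have "\<dots> = \<beta> * (\<beta> ^ j * (scaled_floor \<beta> x N + 1))" by (simp only: Suc.IH)
    finally show ?case by (simp add: algebra_simps)
  qed simp
  define e where "e = real (scaled_floor \<beta> x N) + 1 - \<bar>x\<bar> * real \<beta> ^ N"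
  have "e > 0" using scaled_floor_gt[of x \<beta> N] unfolding e_def by simp
  obtain j where "1 / e < real \<beta> ^ j" using real_arch_pow[of "real \<beta>" "1 / e"] assms by auto
  then have j: "1 < real \<beta> ^ j * e" using \<open>e > 0\<close> by (simp add: field_simps)
  have "real (scaled_floor \<beta> x (N + j)) + 1 = real \<beta> ^ j * (real (scaled_floor \<beta> x N) + 1)"
    using arg_cong[OF tower[of j], of real] by (simp add: algebra_simps)
  also have "\<dots> = \<bar>x\<bar> * real \<beta> ^ (N + j) + real \<beta> ^ j * e"
    unfolding e_def by (simp add: power_add algebra_simps)
  finally show False using j scaled_floor_le[of \<beta> x "N + j"] by simp
qed

lemma eq_0_if_digits_0:
  assumes "\<beta> \<ge> 2" "\<forall>i. int_digit x \<beta> i = 0" "\<forall>k>0. frac_digit x \<beta> k = 0"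
  shows "x = 0"
proof (rule ccontr)
  assume "x \<noteq> 0"
  have "nat \<lfloor>\<bar>x\<bar>\<rfloor> = 0"
    using assms(2) by (intro nat_eq_0_if_digits_0[OF assms(1)]) (simp add: int_digit_eq)
  then have zero: "scaled_floor \<beta> x k = 0" for k
    by (induction k) (use assms(1,3) scaled_floor_Suc[of \<beta> x] in \<open>auto simp: scaled_floor_0\<close>)
  obtain k where "1 / \<bar>x\<bar> < real \<beta> ^ k" using real_arch_pow[of "real \<beta>" "1 / \<bar>x\<bar>"] assms(1) by auto
  then have "1 < \<bar>x\<bar> * real \<beta> ^ k" using \<open>x \<noteq> 0\<close> by (simp add: field_simps)
  then show False using scaled_floor_gt[of x \<beta> k] zero[of k] by simp
qed

lemma digits_sum_div_mod:
  fixes z :: "nat \<Rightarrow> nat"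
  assumes "\<forall>i. z i < \<beta>"
  shows "(\<Sum>i<N. z i * \<beta> ^ i) div \<beta> ^ k mod \<beta> = (if k < N then z k else 0)"
  using assms
proof (induction k arbitrary: z N)
  have shift: "(\<Sum>i<Suc M. z i * \<beta> ^ i) = z 0 + \<beta> * (\<Sum>i<M. z (Suc i) * \<beta> ^ i)" for z :: "nat \<Rightarrow> nat" and M
    unfolding sum.lessThan_Suc_shift by (simp add: sum_distrib_left algebra_simps)
  {
    case 0 show ?case
    proof (cases N)
      case (Suc M) show ?thesis unfolding Suc shift using 0 by simp
    qed simp
  next
    case (Suc k)
    show ?case
    proof (cases N)
      case (Suc M)
      have "z 0 < \<beta>" using Suc.prems by simp
      then have "(\<Sum>i<N. z i * \<beta> ^ i) div \<beta> = (\<Sum>i<M. z (Suc i) * \<beta> ^ i)"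
        unfolding Suc shift by simp
      then have "(\<Sum>i<N. z i * \<beta> ^ i) div \<beta> ^ Suc k = (\<Sum>i<M. z (Suc i) * \<beta> ^ i) div \<beta> ^ k"
        by (simp add: div_mult2_eq)
      then show ?thesis using Suc.IH[of "\<lambda>i. z (Suc i)" M] Suc.prems \<open>N = Suc M\<close> by simp
    qed simp
  }
qed

definition digit_tail :: "nat \<Rightarrow> (nat \<Rightarrow> nat) \<Rightarrow> nat \<Rightarrow> real" where
  "digit_tail \<beta> d k = (\<Sum>j. real (d (k + Suc j)) / real \<beta> ^ Suc j)"

context
  fixes \<beta> :: nat and d :: "nat \<Rightarrow> nat"
  assumes base: "\<beta> \<ge> 2" and digits: "\<forall>k>0. d k < \<beta>"
begin

lemma summable_digit_tail: "summable (\<lambda>j. real (d (k + Suc j)) / real \<beta> ^ Suc j)"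
proof (rule summable_comparison_test'[of "\<lambda>j. (1 / real \<beta>) ^ j"])
  show "summable (\<lambda>j. (1 / real \<beta>) ^ j)" using base by (intro summable_geometric) simp
  show "norm (real (d (k + Suc j)) / real \<beta> ^ Suc j) \<le> (1 / real \<beta>) ^ j" for j
    using digits[rule_format, of "k + Suc j"] base by (simp add: power_divide field_simps)
qed

lemma digit_tail_nonneg: "0 \<le> digit_tail \<beta> d k"
  unfolding digit_tail_def by (intro suminf_nonneg summable_digit_tail) simp

lemma digit_tail_Suc: "digit_tail \<beta> d k = (real (d (Suc k)) + digit_tail \<beta> d (Suc k)) / real \<beta>"
proof -
  have "(\<Sum>j. real (d (k + Suc (Suc j))) / real \<beta> ^ Suc (Suc j)) = digit_tail \<beta> d (Suc k) / real \<beta>"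
    unfolding digit_tail_def using suminf_divide[OF summable_digit_tail[of "Suc k"], of "real \<beta>"]
    by (simp add: field_simps)
  then show ?thesis
    using suminf_split_head[OF summable_digit_tail[of k]] unfolding digit_tail_def
    by (simp add: add_divide_distrib)
qed

lemma digit_tail_less_1:
  assumes "\<exists>\<^sub>\<infinity>k. d k \<noteq> \<beta> - 1"
  shows "digit_tail \<beta> d k < 1"
proof -
  \<comment> \<open>compare with the tail consisting of maximal digits, which sums to 1\<close>
  define g where "g j = real (d (k + Suc j)) / real \<beta> ^ Suc j" for j
  define h where "h j = (real \<beta> - 1) / real \<beta> ^ Suc j" for j
  have "(\<lambda>j. (real \<beta> - 1) / real \<beta> * (1 / real \<beta>) ^ j) sums ((real \<beta> - 1) / real \<beta> * (1 / (1 - 1 / real \<beta>)))"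
    using base by (intro sums_mult geometric_sums) simp
  then have h: "h sums 1" unfolding h_def using base by (simp add: power_divide field_simps)
  have gh: "g j \<le> h j" for j
    using digits[rule_format, of "k + Suc j"] base unfolding g_def h_def by (simp add: divide_right_mono)
  obtain m where m: "m > k" "d m \<noteq> \<beta> - 1" using assms unfolding INFM_nat by blast
  have "g (m - Suc k) < h (m - Suc k)"
    using digits[rule_format, of m] m base unfolding g_def h_def by (simp add: divide_strict_right_mono)
  then have "0 < (\<Sum>j. h j - g j)"
    by (intro suminf_pos2[of _ "m - Suc k"] summable_diff sums_summable[OF h])
      (use gh summable_digit_tail in \<open>auto simp: g_def\<close>)
  also have "\<dots> = 1 - digit_tail \<beta> d k"
    using suminf_diff[OF sums_summable[OF h] summable_digit_tail[of k]] h
    unfolding digit_tail_def g_def by (simp add: sums_iff)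
  finally show ?thesis by simp
qed

lemma exists_real_with_digits:
  assumes "\<exists>\<^sub>\<infinity>k. d k \<noteq> \<beta> - 1"
  shows "\<exists>a\<ge>0. nat \<lfloor>a\<rfloor> = T \<and> (\<forall>k>0. frac_digit a \<beta> k = d k)"
proof -
  define a where "a = real T + digit_tail \<beta> d 0"
  define Q where "Q = rec_nat T (\<lambda>k q. \<beta> * q + d (Suc k))"
  have Q_Suc: "Q (Suc k) = \<beta> * Q k + d (Suc k)" for k unfolding Q_def by simp
  have a_nonneg: "a \<ge> 0" unfolding a_def using digit_tail_nonneg by simp
  have scaled: "a * real \<beta> ^ k = real (Q k) + digit_tail \<beta> d k" for k
  proof (induction k)
    case 0 then show ?case by (simp add: a_def Q_def)
  next
    case (Suc k) then show ?case
      using digit_tail_Suc[of k] base by (simp add: Q_Suc field_simps)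
  qed
  have floor_Q: "scaled_floor \<beta> a k = Q k" for k
  proof -
    have "\<lfloor>a * real \<beta> ^ k\<rfloor> = int (Q k)"
      unfolding scaled using digit_tail_nonneg[of k] digit_tail_less_1[OF assms, of k]
      by (intro floor_unique) simp_all
    then show ?thesis unfolding scaled_floor_def using a_nonneg by simp
  qed
  have "nat \<lfloor>a\<rfloor> = T" using floor_Q[of 0] a_nonneg by (simp add: scaled_floor_0 Q_def)
  moreover have "frac_digit a \<beta> k = d k" if "k > 0" for k
    using that digits by (auto simp: floor_Q Q_def frac_digit_eq gr0_conv_Suc)
  ultimately show ?thesis using a_nonneg by blast
qed

end

lemma omega_regular_annotate_position:
  assumes "omega_regular L"
  shows "omega_regular {w. (\<lambda>i. (w i, i = 0, odd i)) \<in> L}"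
proof -
  have "((\<lambda>(_, p). (False, \<not> p)) ^^ i) (True, False) = (i = 0, odd i)" for i
    by (induction i) auto
  then show ?thesis using omega_regular_annotate[OF assms, of "\<lambda>(_, p). (False, \<not> p)" "(True, False)"]
    by simp
qed

\<comment> \<open>The last clause excludes \<open>-0\<close>: given the others, it says that a minus sign is followed
  by some nonzero digit.\<close>
definition rep_form :: "nat \<Rightarrow> (nat \<Rightarrow> repsym) \<Rightarrow> bool" where
  "rep_form \<beta> w \<longleftrightarrow> w 0 \<in> {Plus, Minus} \<and> (\<forall>n>0. w n \<in> Dig ` Digit \<beta>) \<and>
     (\<forall>\<^sub>\<infinity>n. odd n \<longrightarrow> w n = Dig 0) \<and> (\<exists>\<^sub>\<infinity>n. even n \<and> w n \<noteq> Dig (\<beta> - 1)) \<and>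
     (\<exists>n. w n \<notin> {Minus, Dig 0})"

lemma rep_Suc_double: "rep x \<beta> (Suc (2 * i)) = Dig (int_digit x \<beta> i)"
  unfolding rep_def by simp

lemma rep_double: "k > 0 \<Longrightarrow> rep x \<beta> (2 * k) = Dig (frac_digit x \<beta> k)"
  unfolding rep_def by simp

lemma rep_form_rep:
  assumes "\<beta> \<ge> 2"
  shows "rep_form \<beta> (rep x \<beta>)"
proof -
  have digits: "rep x \<beta> n \<in> Dig ` Digit \<beta>" if "n > 0" for n
    using that assms unfolding rep_def Digit_def by (auto simp: int_digit_eq frac_digit_eq)
  have "\<forall>\<^sub>\<infinity>n. odd n \<longrightarrow> rep x \<beta> n = Dig 0"
    unfolding MOST_nat
  proof (intro exI allI impI)
    fix n assume "2 * nat \<lfloor>\<bar>x\<bar>\<rfloor> < n" "odd n"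
    then have "n = Suc (2 * (n div 2))" "nat \<lfloor>\<bar>x\<bar>\<rfloor> \<le> n div 2" by simp_all
    then show "rep x \<beta> n = Dig 0" using int_digit_eq_0[OF assms] by (metis rep_Suc_double)
  qed
  moreover have "\<exists>\<^sub>\<infinity>n. even n \<and> rep x \<beta> n \<noteq> Dig (\<beta> - 1)"
    unfolding INFM_nat
  proof
    fix m
    obtain k where "k > m" "frac_digit x \<beta> k \<noteq> \<beta> - 1"
      using frac_digit_INFM_not_max[OF assms] unfolding INFM_nat by blast
    moreover from \<open>k > m\<close> have "rep x \<beta> (2 * k) = Dig (frac_digit x \<beta> k)" by (intro rep_double) simp
    ultimately show "\<exists>n>m. even n \<and> rep x \<beta> n \<noteq> Dig (\<beta> - 1)"
      by (intro exI[of _ "2 * k"]) simp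
  qed
  moreover have "\<exists>n. rep x \<beta> n \<notin> {Minus, Dig 0}"
  proof (rule ccontr)
    assume "\<not> ?thesis"
    then have all: "rep x \<beta> n \<in> {Minus, Dig 0}" for n by blast
    have x: "x < 0" using all[of 0] by (auto simp: rep_def split: if_splits)
    have "int_digit x \<beta> i = 0" for i using all[of "Suc (2 * i)"] by (simp add: rep_Suc_double)
    moreover have "frac_digit x \<beta> k = 0" if "k > 0" for k using all[of "2 * k"] that by (simp add: rep_double)
    ultimately have "x = 0" using eq_0_if_digits_0[OF assms] by blast
    then show False using x by simp
  qed
  ultimately show ?thesis unfolding rep_form_def using digits by (simp add: rep_def)
qed

fun digit_value :: "repsym \<Rightarrow> nat" where
  "digit_value (Dig d) = d"
| "digit_value _ = 0"

lemma rep_form_imp_rep: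
  assumes base: "\<beta> \<ge> 2" and form: "rep_form \<beta> w"
  shows "\<exists>x. w = rep x \<beta>"
proof -
  define z where "z i = digit_value (w (Suc (2 * i)))" for i
  define d where "d k = digit_value (w (2 * k))" for k
  have w_digit: "w n = Dig (digit_value (w n))" "digit_value (w n) < \<beta>" if "n > 0" for n
  proof -
    have "w n \<in> Dig ` Digit \<beta>" using form that unfolding rep_form_def by blast
    then show "w n = Dig (digit_value (w n))" "digit_value (w n) < \<beta>" by (auto simp: Digit_def)
  qed
  have w_eq: "w n = (if odd n then Dig (z (n div 2)) else Dig (d (n div 2)))" if "n > 0" for n
  proof (cases "odd n")
    case True
    then have "z (n div 2) = digit_value (w n)" unfolding z_def by simp
    then show ?thesis using w_digit(1)[OF that] True by simp
  next
    case False
    then have "d (n div 2) = digit_value (w n)" unfolding d_def by simp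
    then show ?thesis using w_digit(1)[OF that] False by simp
  qed
  obtain N where N: "\<And>n. n > N \<Longrightarrow> odd n \<Longrightarrow> w n = Dig 0"
    using form unfolding rep_form_def MOST_nat by blast
  have z_less: "z i < \<beta>" for i using w_digit(2) unfolding z_def by simp
  have z_zero: "z i = 0" if "i \<ge> N" for i using N[of "Suc (2 * i)"] that unfolding z_def by simp
  have d_less: "\<forall>k>0. d k < \<beta>" using w_digit(2) unfolding d_def by simp
  have "\<exists>\<^sub>\<infinity>k. d k \<noteq> \<beta> - 1" unfolding INFM_nat
  proof
    fix m
    obtain n where n: "n > 2 * m" "even n" "w n \<noteq> Dig (\<beta> - 1)"
      using form unfolding rep_form_def INFM_nat by blast
    then show "\<exists>k>m. d k \<noteq> \<beta> - 1" using w_eq[of n] by (intro exI[of _ "n div 2"]) auto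
  qed
  then obtain a where a: "a \<ge> 0" "nat \<lfloor>a\<rfloor> = (\<Sum>i<N. z i * \<beta> ^ i)" "\<And>k. k > 0 \<Longrightarrow> frac_digit a \<beta> k = d k"
    using exists_real_with_digits[OF base d_less] by blast
  have int_digits: "int_digit a \<beta> i = z i" for i
  proof -
    have "int_digit a \<beta> i = (\<Sum>i<N. z i * \<beta> ^ i) div \<beta> ^ i mod \<beta>"
      unfolding int_digit_eq using a(1,2) by simp
    also have "\<dots> = z i"
      using digits_sum_div_mod[of z \<beta> N i] z_less z_zero[of i] by (simp split: if_splits)
    finally show ?thesis .
  qed
  define x where "x = (if w 0 = Minus then - a else a)"
  have "int_digit x \<beta> i = int_digit a \<beta> i" "frac_digit x \<beta> k = frac_digit a \<beta> k" for i k
    unfolding x_def int_digit_def frac_digit_def by simp_all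
  then have x_digits: "int_digit x \<beta> i = z i" "k > 0 \<Longrightarrow> frac_digit x \<beta> k = d k" for i k
    using int_digits a(3) by simp_all
  have w0: "w 0 \<in> {Plus, Minus}" using form unfolding rep_form_def by blast
  have "w 0 = rep x \<beta> 0"
  proof (cases "w 0 = Minus")
    case True
    have "a \<noteq> 0"
    proof
      assume "a = 0"
      then have "w n \<in> {Minus, Dig 0}" for n
        using True int_digits a(3) w_eq[of n] unfolding int_digit_def frac_digit_def
        by (cases "n = 0") auto
      moreover obtain n where "w n \<notin> {Minus, Dig 0}" using form unfolding rep_form_def by blast
      ultimately show False by blast
    qed
    then show ?thesis using True a(1) unfolding x_def rep_def by simp
  next
    case False
    then show ?thesis using w0 a(1) unfolding x_def rep_def by auto
  qed
  moreover have "w n = rep x \<beta> n" if "n > 0" for n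
    using that x_digits w_eq[OF that] unfolding rep_def by (auto elim!: oddE)
  ultimately have "w = rep x \<beta>" by (metis gr0I ext)
  then show ?thesis ..
qed

lemma omega_regular_rep_form: "omega_regular {w. rep_form \<beta> w}"
proof -
  let ?shape = "{v. \<forall>i. case v i of (a, first, _) \<Rightarrow> if first then a \<in> {Plus, Minus} else a \<in> Dig ` Digit \<beta>}"
  let ?int_finite = "{v. \<forall>\<^sub>\<infinity>i. case v i of (a, _, at_odd) \<Rightarrow> at_odd \<longrightarrow> a = Dig 0}"
  let ?frac_not_max = "{v. \<exists>\<^sub>\<infinity>i. case v i of (a, _, at_odd) \<Rightarrow> \<not> at_odd \<and> a \<noteq> Dig (\<beta> - 1)}"
  have "(\<forall>i. if i = 0 then w 0 \<in> {Plus, Minus} else w i \<in> Dig ` Digit \<beta>) \<longleftrightarrow>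
      w 0 \<in> {Plus, Minus} \<and> (\<forall>n>0. w n \<in> Dig ` Digit \<beta>)" for w :: "nat \<Rightarrow> repsym"
    by (metis gr0I less_irrefl)
  then have "{w. rep_form \<beta> w} = {w. (\<lambda>i. (w i, i = 0, odd i)) \<in> ?shape \<inter> ?int_finite \<inter> ?frac_not_max}
      \<inter> {w. \<exists>n. w n \<notin> {Minus, Dig 0}}"
    unfolding rep_form_def by auto
  moreover have "omega_regular \<dots>"
    by (intro omega_regular_Int omega_regular_annotate_position omega_regular_always
        omega_regular_MOST omega_regular_INFM omega_regular_eventually)
  ultimately show ?thesis by simp
qed

datatype cmp = Lt | Eq | Gt

instance cmp :: finite
proof
  have "(UNIV :: cmp set) \<subseteq> {Lt, Eq, Gt}" using cmp.exhaust by blast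
  then show "finite (UNIV :: cmp set)" by (rule finite_subset) simp
qed

definition compare :: "'a::linorder \<Rightarrow> 'a \<Rightarrow> cmp" where
  "compare a b = (if a < b then Lt else if a = b then Eq else Gt)"

definition cmp_lex :: "cmp \<Rightarrow> cmp \<Rightarrow> cmp" where
  "cmp_lex c d = (if c = Eq then d else c)"

lemma compare_lex:
  fixes B p q d e :: nat
  assumes "d < B" "e < B"
  shows "compare (B * p + d) (B * q + e) = cmp_lex (compare p q) (compare d e)"
proof -
  have less: "B * p' + d' < B * q' + e'" if "p' < q'" "d' < B" for p' q' d' e' :: nat
  proof -
    have "B * p' + d' < B * Suc p'" using that(2) by simp
    also have "\<dots> \<le> B * q'" using that(1) by (intro mult_le_mono2) simp
    finally show ?thesis by simp
  qed
  show ?thesis using assms less[of p q d e] less[of q p e d] unfolding compare_def cmp_lex_def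
    by (cases p q rule: linorder_cases) auto
qed

fun cmp_flip :: "cmp \<Rightarrow> cmp" where
  "cmp_flip Lt = Gt"
| "cmp_flip Eq = Eq"
| "cmp_flip Gt = Lt"

definition signed_compare :: "bool \<Rightarrow> bool \<Rightarrow> cmp \<Rightarrow> cmp" where
  "signed_compare neg_x neg_y c =
     (if neg_x \<and> neg_y then cmp_flip c else if neg_x then Lt else if neg_y then Gt else c)"

lemma compare_eq_signed_compare:
  fixes x y :: real
  shows "compare x y = signed_compare (x < 0) (y < 0) (compare \<bar>x\<bar> \<bar>y\<bar>)"
  unfolding compare_def signed_compare_def by auto

fun cmp_sgn :: "cmp \<Rightarrow> real" where
  "cmp_sgn Lt = -1"
| "cmp_sgn Eq = 0"
| "cmp_sgn Gt = 1"

lemma relation_iff_cmp_sgn: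
  fixes x y :: real
  assumes "R \<in> {(\<le>), (<), (\<ge>), (>), (=), (\<noteq>)}"
  shows "R x y \<longleftrightarrow> R (cmp_sgn (compare x y)) 0"
  using assms unfolding compare_def by auto

lemma compare_mod_power_Suc:
  fixes u v :: nat
  assumes "\<beta> > 0"
  shows "compare (u mod \<beta> ^ Suc j) (v mod \<beta> ^ Suc j) =
    cmp_lex (compare (u div \<beta> ^ j mod \<beta>) (v div \<beta> ^ j mod \<beta>)) (compare (u mod \<beta> ^ j) (v mod \<beta> ^ j))"
proof -
  have split: "n mod \<beta> ^ Suc j = \<beta> ^ j * (n div \<beta> ^ j mod \<beta>) + n mod \<beta> ^ j" for n :: nat
    unfolding power_Suc2 by (rule mod_mult2_eq)
  show ?thesis unfolding split using assms by (intro compare_lex) simp_all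
qed

type_synonym cmp_state = "bool \<times> bool \<times> cmp \<times> cmp"

\<comment> \<open>Integer digits arrive least significant first, so a new difference overrides the
  comparison so far; fractional digits arrive most significant first, so the first
  difference persists.\<close>
definition cmp_step :: "cmp_state \<Rightarrow> (repsym \<times> repsym) \<times> bool \<times> bool \<Rightarrow> cmp_state" where
  "cmp_step = (\<lambda>(neg_x, neg_y, c_int, c_frac) ((a, b), first, at_odd).
     if first then (a = Minus, b = Minus, Eq, Eq)
     else if at_odd then (neg_x, neg_y, cmp_lex (compare (digit_value a) (digit_value b)) c_int, c_frac)
     else (neg_x, neg_y, c_int, cmp_lex c_frac (compare (digit_value a) (digit_value b))))"

definition cmp_result :: "cmp_state \<Rightarrow> cmp" where
  "cmp_result = (\<lambda>(neg_x, neg_y, c_int, c_frac). signed_compare neg_x neg_y (cmp_lex c_int c_frac))"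

definition cmp_state :: "nat \<Rightarrow> real \<Rightarrow> real \<Rightarrow> nat \<Rightarrow> cmp_state" where
  "cmp_state \<beta> x y n = (x < 0, y < 0,
     compare (nat \<lfloor>\<bar>x\<bar>\<rfloor> mod \<beta> ^ ((n + 1) div 2)) (nat \<lfloor>\<bar>y\<bar>\<rfloor> mod \<beta> ^ ((n + 1) div 2)),
     compare (scaled_floor \<beta> x (n div 2) mod \<beta> ^ (n div 2)) (scaled_floor \<beta> y (n div 2) mod \<beta> ^ (n div 2)))"

lemma cmp_state_Suc:
  assumes "\<beta> > 0"
  shows "cmp_state \<beta> x y (Suc n) = cmp_step (cmp_state \<beta> x y n) ((rep x \<beta> (Suc n), rep y \<beta> (Suc n)), False, even n)"
proof -
  consider (even) j where "n = 2 * j" | (odd) j where "n = Suc (2 * j)"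
    by (metis evenE oddE Suc_eq_plus1)
  then show ?thesis
  proof cases
    case even
    have "compare (nat \<lfloor>\<bar>x\<bar>\<rfloor> mod \<beta> ^ Suc j) (nat \<lfloor>\<bar>y\<bar>\<rfloor> mod \<beta> ^ Suc j) =
      cmp_lex (compare (int_digit x \<beta> j) (int_digit y \<beta> j))
        (compare (nat \<lfloor>\<bar>x\<bar>\<rfloor> mod \<beta> ^ j) (nat \<lfloor>\<bar>y\<bar>\<rfloor> mod \<beta> ^ j))"
      unfolding int_digit_eq by (rule compare_mod_power_Suc[OF assms])
    then show ?thesis using even by (simp add: cmp_state_def cmp_step_def rep_Suc_double)
  next
    case odd
    have "rep x \<beta> (Suc n) = Dig (frac_digit x \<beta> (Suc j))" for x
      using rep_double[of "Suc j" x \<beta>] odd by simp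
    moreover have "compare (scaled_floor \<beta> x (Suc j) mod \<beta> ^ Suc j) (scaled_floor \<beta> y (Suc j) mod \<beta> ^ Suc j) =
      cmp_lex (compare (scaled_floor \<beta> x j mod \<beta> ^ j) (scaled_floor \<beta> y j mod \<beta> ^ j))
        (compare (frac_digit x \<beta> (Suc j)) (frac_digit y \<beta> (Suc j)))"
      unfolding scaled_floor_mod_Suc[OF assms] using assms by (intro compare_lex) (simp_all add: frac_digit_eq)
    ultimately show ?thesis using odd by (simp add: cmp_state_def cmp_step_def)
  qed
qed

lemma drun_cmp_step:
  assumes "\<beta> > 0"
  shows "drun s0 cmp_step (\<lambda>i. ((rep x \<beta> i, rep y \<beta> i), i = 0, odd i)) (Suc n) = cmp_state \<beta> x y n"
proof (induction n)
  case 0 then show ?case by (simp add: cmp_state_def cmp_step_def rep_def compare_def split: prod.split)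
next
  case (Suc n) then show ?case
    by (simp only: drun.simps(2)[of s0 cmp_step _ "Suc n"] cmp_state_Suc[OF assms]) simp
qed

lemma scaled_floor_less_eventually:
  assumes "\<beta> \<ge> 2" "\<bar>x\<bar> < \<bar>y\<bar>"
  shows "\<forall>\<^sub>\<infinity>k. scaled_floor \<beta> x k < scaled_floor \<beta> y k"
proof -
  obtain K where K: "1 / (\<bar>y\<bar> - \<bar>x\<bar>) < real \<beta> ^ K"
    using real_arch_pow[of "real \<beta>" "1 / (\<bar>y\<bar> - \<bar>x\<bar>)"] assms(1) by auto
  have "scaled_floor \<beta> x k < scaled_floor \<beta> y k" if "k \<ge> K" for k
  proof -
    have "1 < (\<bar>y\<bar> - \<bar>x\<bar>) * real \<beta> ^ K" using K assms(2) by (simp add: field_simps)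
    also have "\<dots> \<le> (\<bar>y\<bar> - \<bar>x\<bar>) * real \<beta> ^ k"
      using assms that by (intro mult_left_mono power_increasing) simp_all
    finally have "1 < (\<bar>y\<bar> - \<bar>x\<bar>) * real \<beta> ^ k" .
    then have "real (scaled_floor \<beta> x k) < real (scaled_floor \<beta> y k)"
      using scaled_floor_le[of \<beta> x k] scaled_floor_gt[of y \<beta> k] by (simp add: algebra_simps)
    then show ?thesis by simp
  qed
  then show ?thesis unfolding MOST_nat_le by blast
qed

lemma compare_scaled_floor_eventually:
  assumes "\<beta> \<ge> 2"
  shows "\<forall>\<^sub>\<infinity>k. compare (scaled_floor \<beta> x k) (scaled_floor \<beta> y k) = compare \<bar>x\<bar> \<bar>y\<bar>"
proof (cases "\<bar>x\<bar>" "\<bar>y\<bar>" rule: linorder_cases)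
  case less show ?thesis
    using scaled_floor_less_eventually[OF assms less] by (rule MOST_mono) (use less in \<open>simp add: compare_def\<close>)
next
  case equal then show ?thesis by (simp add: compare_def scaled_floor_def)
next
  case greater show ?thesis
    using scaled_floor_less_eventually[OF assms greater] by (rule MOST_mono) (use greater in \<open>auto simp: compare_def\<close>)
qed

lemma cmp_result_eventually:
  assumes "\<beta> \<ge> 2"
  shows "\<forall>\<^sub>\<infinity>n. cmp_result (drun s0 cmp_step (\<lambda>i. ((rep x \<beta> i, rep y \<beta> i), i = 0, odd i)) (Suc n)) = compare x y"
proof -
  obtain K where K: "\<And>k. k \<ge> K \<Longrightarrow> compare (scaled_floor \<beta> x k) (scaled_floor \<beta> y k) = compare \<bar>x\<bar> \<bar>y\<bar>"
    using compare_scaled_floor_eventually[OF assms] unfolding MOST_nat_le by blast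
  have "cmp_result (drun s0 cmp_step (\<lambda>i. ((rep x \<beta> i, rep y \<beta> i), i = 0, odd i)) (Suc n)) = compare x y"
    if n: "n \<ge> 2 * (K + nat \<lfloor>\<bar>x\<bar>\<rfloor> + nat \<lfloor>\<bar>y\<bar>\<rfloor>)" for n
  proof -
    define k where "k = n div 2"
    have "nat \<lfloor>\<bar>x\<bar>\<rfloor> mod \<beta> ^ ((n + 1) div 2) = nat \<lfloor>\<bar>x\<bar>\<rfloor>" "nat \<lfloor>\<bar>y\<bar>\<rfloor> mod \<beta> ^ ((n + 1) div 2) = nat \<lfloor>\<bar>y\<bar>\<rfloor>"
      using n less_power_base[OF assms, of "(n + 1) div 2"] by (simp_all add: order_le_less_trans)
    moreover have "compare (scaled_floor \<beta> x k) (scaled_floor \<beta> y k) = cmp_lex (compare (nat \<lfloor>\<bar>x\<bar>\<rfloor>) (nat \<lfloor>\<bar>y\<bar>\<rfloor>))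
        (compare (scaled_floor \<beta> x k mod \<beta> ^ k) (scaled_floor \<beta> y k mod \<beta> ^ k))"
      using scaled_floor_eq_int_part[of \<beta> x k] scaled_floor_eq_int_part[of \<beta> y k] assms
      by (metis compare_lex mod_less_divisor zero_less_power neq0_conv not_numeral_le_zero)
    moreover have "k \<ge> K" using n unfolding k_def by simp
    ultimately show ?thesis
      using K[of k] drun_cmp_step[of \<beta>] assms compare_eq_signed_compare[of x y]
      by (simp add: cmp_result_def cmp_state_def k_def)
  qed
  then show ?thesis unfolding MOST_nat_le by blast
qed

lemma INFM_comp_eventually_const:
  fixes f :: "nat \<Rightarrow> 'a"
  assumes "\<forall>\<^sub>\<infinity>n. f n = c"
  shows "(\<exists>\<^sub>\<infinity>n. P (f n)) \<longleftrightarrow> P c"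
proof
  assume "\<exists>\<^sub>\<infinity>n. P (f n)"
  then have "\<exists>\<^sub>\<infinity>n. P (f n) \<and> f n = c" using assms by (rule frequently_eventually_frequently)
  then show "P c" by (auto simp: INFM_nat)
next
  assume "P c"
  then show "\<exists>\<^sub>\<infinity>n. P (f n)" using assms by (intro MOST_INFM) (auto elim: MOST_mono)
qed

lemma comparator_accepts_iff:
  assumes "\<beta> \<ge> 2"
  shows "(\<exists>\<^sub>\<infinity>i. drun s0 cmp_step (\<lambda>i. ((rep x \<beta> i, rep y \<beta> i), i = 0, odd i)) i \<in> {s. P (cmp_result s)})
    \<longleftrightarrow> P (compare x y)"
  using INFM_Suc_iff[of "\<lambda>i. P (cmp_result (drun s0 cmp_step (\<lambda>i. ((rep x \<beta> i, rep y \<beta> i), i = 0, odd i)) i))"]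
    INFM_comp_eventually_const[OF cmp_result_eventually[OF assms], of P]
  by simp

lemma omega_regular_rep_relation:
  assumes "\<beta> \<ge> 2" "R \<in> {(\<le>), (<), (\<ge>), (>), (=), (\<noteq>)}"
  shows "omega_regular {w. \<exists>x y. w = (\<lambda>i. (rep x \<beta> i, rep y \<beta> i)) \<and> R x y}"
proof -
  let ?F = "{s. R (cmp_sgn (cmp_result s)) 0}"
  define accepted where "accepted = {w. (\<lambda>i. (w i, i = 0, odd i)) \<in>
     {v. \<exists>\<^sub>\<infinity>i. drun (False, False, Eq, Eq) cmp_step v i \<in> ?F}}"
  have accepted: "(\<lambda>i. (rep x \<beta> i, rep y \<beta> i)) \<in> accepted \<longleftrightarrow> R x y" for x y
    unfolding accepted_def
    using comparator_accepts_iff[OF assms(1), where P = "\<lambda>c. R (cmp_sgn c) 0"] relation_iff_cmp_sgn[OF assms(2)]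
    by simp
  have "{w. \<exists>x y. w = (\<lambda>i. (rep x \<beta> i, rep y \<beta> i)) \<and> R x y} =
      {w. fst \<circ> w \<in> {w. rep_form \<beta> w}} \<inter> {w. snd \<circ> w \<in> {w. rep_form \<beta> w}} \<inter> accepted"
  proof (intro set_eqI iffI)
    fix w assume "w \<in> {w. \<exists>x y. w = (\<lambda>i. (rep x \<beta> i, rep y \<beta> i)) \<and> R x y}"
    then obtain x y where "w = (\<lambda>i. (rep x \<beta> i, rep y \<beta> i))" "R x y" by blast
    then show "w \<in> {w. fst \<circ> w \<in> {w. rep_form \<beta> w}} \<inter> {w. snd \<circ> w \<in> {w. rep_form \<beta> w}} \<inter> accepted"
      using rep_form_rep[OF assms(1)] accepted by (simp add: o_def)
  next
    fix w assume w: "w \<in> {w. fst \<circ> w \<in> {w. rep_form \<beta> w}} \<inter> {w. snd \<circ> w \<in> {w. rep_form \<beta> w}} \<inter> accepted"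
    then obtain x y where "fst \<circ> w = rep x \<beta>" "snd \<circ> w = rep y \<beta>"
      using rep_form_imp_rep[OF assms(1)] by (metis Int_iff mem_Collect_eq)
    then have "w = (\<lambda>i. (rep x \<beta> i, rep y \<beta> i))" by (auto simp: fun_eq_iff prod_eq_iff)
    then show "w \<in> {w. \<exists>x y. w = (\<lambda>i. (rep x \<beta> i, rep y \<beta> i)) \<and> R x y}" using w accepted by auto
  qed
  moreover have "omega_regular accepted"
    unfolding accepted_def by (intro omega_regular_annotate_position omega_regular_det)
  ultimately show ?thesis
    by (simp only:) (intro omega_regular_Int omega_regular_vimage omega_regular_rep_form)
qed

theorem theorem3:
  fixes \<mu> \<beta> :: nat and f :: "(nat \<Rightarrow> nat) \<Rightarrow> real" and R :: "real \<Rightarrow> real \<Rightarrow> bool"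
  assumes "\<mu> > 0" and "\<beta> \<ge> 2"
    and "omega_regular_function {0..\<mu>} f \<beta>"
    and "R \<in> {(\<le>), (<), (\<ge>), (>), (=), (\<noteq>)}"
  shows "omega_regular_comparator {0..\<mu>} f R"
proof -
  obtain M where M: "buchi_over ({0..\<mu>} \<times> AlphaRep \<beta>) M"
    and f: "\<And>A x. A \<in> omega_words {0..\<mu>} \<Longrightarrow> buchi_accepts M (\<lambda>i. (A i, rep x \<beta> i)) \<longleftrightarrow> f A = x"
    using assms(3) unfolding omega_regular_function_def by blast
  let ?C = "{w. \<exists>x y. w = (\<lambda>i. (rep x \<beta> i, rep y \<beta> i)) \<and> R x y}"
  let ?L = "{w. \<exists>u v. (\<lambda>i. (fst (w i), u i)) \<in> {w. buchi_accepts M w} \<and>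
    (\<lambda>i. (snd (w i), v i)) \<in> {w. buchi_accepts M w} \<and> (\<lambda>i. (u i, v i)) \<in> ?C}"
  have "omega_regular ?L"
    by (intro omega_regular_compose buchi_over_imp_omega_regular[OF M] omega_regular_rep_relation assms(2,4))
  then obtain N where N: "buchi_over ({0..\<mu>} \<times> {0..\<mu>}) N"
    and L: "\<And>w. w \<in> omega_words ({0..\<mu>} \<times> {0..\<mu>}) \<Longrightarrow> buchi_accepts N w \<longleftrightarrow> w \<in> ?L"
    using omega_regular_imp_buchi_over by blast
  have "buchi_accepts N (\<lambda>i. (A i, B i)) \<longleftrightarrow> R (f A) (f B)"
    if A: "A \<in> omega_words {0..\<mu>}" and B: "B \<in> omega_words {0..\<mu>}" for A B
  proof -
    have "(\<lambda>i. (A i, B i)) \<in> omega_words ({0..\<mu>} \<times> {0..\<mu>})" using A B by (simp add: omega_words_def)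
    then have "buchi_accepts N (\<lambda>i. (A i, B i)) \<longleftrightarrow>
        (\<exists>x y. buchi_accepts M (\<lambda>i. (A i, rep x \<beta> i)) \<and> buchi_accepts M (\<lambda>i. (B i, rep y \<beta> i)) \<and> R x y)"
      using L by (auto simp: fun_eq_iff) blast
    also have "\<dots> \<longleftrightarrow> R (f A) (f B)" using f[OF A] f[OF B] by simp
    finally show ?thesis .
  qed
  then show ?thesis unfolding omega_regular_comparator_def using N by blast
qed

end
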